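(* For all closed terms $t_0,t_1$ of $\lambda_S$, if $t_0 \approx_{\emptyset} t_1$ then $t_0 \equiv t_1$.
   Context: Terms of $\lambda_S$: $t ::= x \mid \lambda x.t \mid t\,t \mid \mathcal{S}k.t \mid \langle t\rangle$ (shift $\mathcal{S}k.t$ binds $k$, reset $\langle t\rangle$), taken up to $\alpha$-conversion; $\mathrm{fv}(t)$ is the set of free variables and $t$ is closed if $\mathrm{fv}(t)=\emptyset$. Values: $v ::= \lambda x.t$. Pure contexts $E ::= \Box \mid v\,E \mid E\,t$; evaluation contexts $F ::= \Box \mid v\,F \mid F\,t \mid \langle F\rangle$; contexts $C ::= \Box \mid \lambda x.C \mid t\,C \mid C\,t \mid \mathcal{S}k.C \mid \langle C\rangle$ (filling may capture variables). Reduction: $F[(\lambda x.t)\,v] \to F[t\{v/x\}]$; $F[\langle E[\mathcal{S}k.t]\rangle] \to F[\langle t\{\lambda x.\langle E[x]\rangle/k\}\rangle]$ ($x\notin\mathrm{fv}(E)$); $F[\langle v\rangle]\to F[v]$. $\to^*$ is the reflexive-transitive closure; $t\Downarrow t'$ means $t\to^* t'$ and $t'$ is irreducible. A term is stuck if it is not a value and is irreducible; a normal form is a value or a stuck term. Closures: for a relation $R$ on closed terms, $\widetilde R$ is the smallest relation on terms containing $R$, all pairs $(x,x)$ for variables $x$, and closed under the constructors ($t_0\widetilde R t_1$ implies $\lambda x.t_0\widetilde R\lambda x.t_1$, $\mathcal S k.t_0\widetilde R\mathcal Sk.t_1$, $\langle t_0\rangle\widetilde R\langle t_1\rangle$; $t_0\widetilde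 R t_1$ and $t_0'\widetilde R t_1'$ imply $t_0t_0'\widetilde R t_1t_1'$), restricted to closed terms. $\widehat R$ is the smallest relation on closed evaluation contexts with $\Box\widehat R\Box$; $v_0F_0\widehat R v_1F_1$ if $F_0\widehat R F_1$, $v_0\widetilde R v_1$; $F_0t_0\widehat R F_1t_1$ if $F_0\widehat RF_1$, $t_0\widetilde R t_1$; $\langle F_0\rangle\widehat R\langle F_1\rangle$ if $F_0\widehat RF_1$ (in particular it relates pure contexts). Environmental bisimilarity: an environment $\mathcal E$ is a relation on closed normal forms relating values only to values and stuck terms only to stuck terms. An environmental relation $\mathcal X$ is a set of environments and of triples $(\mathcal E,t_0,t_1)$ with $t_0,t_1$ closed; write $t_0\,\mathcal X_{\mathcal E}\,t_1$. $\mathcal X$ is an environmental bisimulation if (1) whenever $t_0\,\mathcal X_{\mathcal E}\,t_1$: (a) if $t_0\to t_0'$ then $t_1\to^* t_1'$ with $t_0'\,\mathcal X_{\mathcal E}\,t_1'$; (b) if $t_0$ is a value $v_0$ then $t_1\to^* v_1$ for a value $v_1$ and $\mathcal E\cup\{(v_0,v_1)\}\in\mathcal X$; (c) if $t_0$ is stuck then $t_1\to^* t_1'$ with $t_1'$ stuck and $\mathcal E\cup\{(t_0,t_1')\}\in\mathcal X$; (d) the symmetric conditions with $t_0,t_1$ swapped; (2) whenever $\mathcal E\in\mathcal X$: (a) if $(\lambda x.t_0)\,\mathcal E\,(\lambda x.t_1)$ and $v_0\widetilde{\mathcal E}v_1$ then $t_0\{v_0/x\}\,\mathcal X_{\mathcal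 E}\,t_1\{v_1/x\}$; (b) if $E_0[\mathcal Sk.t_0]\,\mathcal E\,E_1[\mathcal Sk.t_1]$ and $E_0'\widehat{\mathcal E}E_1'$ (pure contexts), then $\langle t_0\{\lambda x.\langle E_0'[E_0[x]]\rangle/k\}\rangle\,\mathcal X_{\mathcal E}\,\langle t_1\{\lambda x.\langle E_1'[E_1[x]]\rangle/k\}\rangle$ for fresh $x$. $\approx$ is the largest environmental bisimulation; $t_0\approx_{\mathcal E}t_1$ means $(\mathcal E,t_0,t_1)\in\approx$. Contextual equivalence: $t_0\equiv t_1$ iff for every context $C$ with $C[t_0],C[t_1]$ closed, $C[t_0]\Downarrow$ a value iff $C[t_1]\Downarrow$ a value, and $C[t_0]\Downarrow$ a stuck term iff $C[t_1]\Downarrow$ a stuck term. *)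

theory Defs
  imports Main
begin

section \<open>Terms of lambda_S (de Bruijn indices, i.e. terms up to alpha-conversion)\<close>

text \<open>Var i is a de Bruijn index; Lam t binds index 0 in t; Shift t binds the
  continuation variable k as index 0 in t; Reset t is the delimiter.\<close>

datatype trm = Var nat | Lam trm | App trm trm | Shift trm | Reset trm

fun closedn :: "nat \<Rightarrow> trm \<Rightarrow> bool" where
  "closedn k (Var i) = (i < k)"
| "closedn k (Lam t) = closedn (Suc k) t"
| "closedn k (App s t) = (closedn k s \<and> closedn k t)"
| "closedn k (Shift t) = closedn (Suc k) t"
| "closedn k (Reset t) = closedn k t"

definition closed :: "trm \<Rightarrow> bool" where
  "closed t \<longleftrightarrow> closedn 0 t"

fun is_val :: "trm \<Rightarrow> bool" where
  "is_val (Lam t) = True"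
| "is_val _ = False"

fun lift :: "nat \<Rightarrow> trm \<Rightarrow> trm" where
  "lift k (Var i) = (if i < k then Var i else Var (Suc i))"
| "lift k (Lam t) = Lam (lift (Suc k) t)"
| "lift k (App s t) = App (lift k s) (lift k t)"
| "lift k (Shift t) = Shift (lift (Suc k) t)"
| "lift k (Reset t) = Reset (lift k t)"

fun subst :: "nat \<Rightarrow> trm \<Rightarrow> trm \<Rightarrow> trm" where
  "subst k u (Var i) = (if i < k then Var i else if i = k then u else Var (i - 1))"
| "subst k u (Lam t) = Lam (subst (Suc k) (lift 0 u) t)"
| "subst k u (App s t) = App (subst k u s) (subst k u t)"
| "subst k u (Shift t) = Shift (subst (Suc k) (lift 0 u) t)"
| "subst k u (Reset t) = Reset (subst k u t)"

text \<open>t{v/x} where x is the outermost bound variable of the body t.\<close>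
abbreviation subst0 :: "trm \<Rightarrow> trm \<Rightarrow> trm" where
  "subst0 u t \<equiv> subst 0 u t"

text \<open>General contexts C; filling is plain replacement of the hole (it may capture).\<close>
datatype ctx = Hole | CLam ctx | CAppR trm ctx | CAppL ctx trm | CShift ctx | CReset ctx

fun plug :: "ctx \<Rightarrow> trm \<Rightarrow> trm" where
  "plug Hole t = t"
| "plug (CLam C) t = Lam (plug C t)"
| "plug (CAppR s C) t = App s (plug C t)"
| "plug (CAppL C s) t = App (plug C t) s"
| "plug (CShift C) t = Shift (plug C t)"
| "plug (CReset C) t = Reset (plug C t)"

fun is_pctx :: "ctx \<Rightarrow> bool" where
  "is_pctx Hole = True"
| "is_pctx (CAppR v E) = (is_val v \<and> is_pctx E)"
| "is_pctx (CAppL E t) = is_pctx E"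
| "is_pctx _ = False"

fun is_fctx :: "ctx \<Rightarrow> bool" where
  "is_fctx Hole = True"
| "is_fctx (CAppR v F) = (is_val v \<and> is_fctx F)"
| "is_fctx (CAppL F t) = is_fctx F"
| "is_fctx (CReset F) = is_fctx F"
| "is_fctx _ = False"

fun lift_ctx :: "nat \<Rightarrow> ctx \<Rightarrow> ctx" where
  "lift_ctx k Hole = Hole"
| "lift_ctx k (CLam C) = CLam (lift_ctx (Suc k) C)"
| "lift_ctx k (CAppR s C) = CAppR (lift k s) (lift_ctx k C)"
| "lift_ctx k (CAppL C s) = CAppL (lift_ctx k C) (lift k s)"
| "lift_ctx k (CShift C) = CShift (lift_ctx (Suc k) C)"
| "lift_ctx k (CReset C) = CReset (lift_ctx k C)"

text \<open>The continuation \<lambda>x.<E[x]> (x fresh), as a de Bruijn term.\<close>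
definition cont :: "ctx \<Rightarrow> trm" where
  "cont E = Lam (Reset (plug (lift_ctx 0 E) (Var 0)))"

text \<open>The continuation \<lambda>x.<E'[E[x]]> (x fresh).\<close>
definition cont2 :: "ctx \<Rightarrow> ctx \<Rightarrow> trm" where
  "cont2 E' E = Lam (Reset (plug (lift_ctx 0 E') (plug (lift_ctx 0 E) (Var 0))))"

inductive red :: "trm \<Rightarrow> trm \<Rightarrow> bool" where
  beta: "is_fctx F \<Longrightarrow> is_val v \<Longrightarrow> red (plug F (App (Lam t) v)) (plug F (subst0 v t))"
| shift: "is_fctx F \<Longrightarrow> is_pctx E \<Longrightarrow>
     red (plug F (Reset (plug E (Shift t)))) (plug F (Reset (subst0 (cont E) t)))"
| reset: "is_fctx F \<Longrightarrow> is_val v \<Longrightarrow> red (plug F (Reset v)) (plug F v)"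

abbreviation reds :: "trm \<Rightarrow> trm \<Rightarrow> bool" where
  "reds \<equiv> red\<^sup>*\<^sup>*"

definition irreducible :: "trm \<Rightarrow> bool" where
  "irreducible t \<longleftrightarrow> (\<nexists>u. red t u)"

definition evals :: "trm \<Rightarrow> trm \<Rightarrow> bool" where
  "evals t t' \<longleftrightarrow> reds t t' \<and> irreducible t'"

definition stuck :: "trm \<Rightarrow> bool" where
  "stuck t \<longleftrightarrow> \<not> is_val t \<and> irreducible t"

type_synonym rel = "(trm \<times> trm) set"

inductive tclos :: "rel \<Rightarrow> trm \<Rightarrow> trm \<Rightarrow> bool" for R where
  base: "(s, t) \<in> R \<Longrightarrow> tclos R s t"
| var: "tclos R (Var i) (Var i)"
| lam: "tclos R s t \<Longrightarrow> tclos R (Lam s) (Lam t)"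
| shft: "tclos R s t \<Longrightarrow> tclos R (Shift s) (Shift t)"
| rst: "tclos R s t \<Longrightarrow> tclos R (Reset s) (Reset t)"
| app: "tclos R s t \<Longrightarrow> tclos R s' t' \<Longrightarrow> tclos R (App s s') (App t t')"

definition rtilde :: "rel \<Rightarrow> trm \<Rightarrow> trm \<Rightarrow> bool" where
  "rtilde R s t \<longleftrightarrow> tclos R s t \<and> closed s \<and> closed t"

inductive rhat :: "rel \<Rightarrow> ctx \<Rightarrow> ctx \<Rightarrow> bool" for R where
  hole: "rhat R Hole Hole"
| argr: "rhat R F0 F1 \<Longrightarrow> is_val v0 \<Longrightarrow> is_val v1 \<Longrightarrow> rtilde R v0 v1 \<Longrightarrow>
     rhat R (CAppR v0 F0) (CAppR v1 F1)"
| funl: "rhat R F0 F1 \<Longrightarrow> rtilde R t0 t1 \<Longrightarrow> rhat R (CAppL F0 t0) (CAppL F1 t1)"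
| rst: "rhat R F0 F1 \<Longrightarrow> rhat R (CReset F0) (CReset F1)"

definition is_env :: "rel \<Rightarrow> bool" where
  "is_env E \<longleftrightarrow> (\<forall>(a, b) \<in> E. closed a \<and> closed b \<and>
      ((is_val a \<and> is_val b) \<or> (stuck a \<and> stuck b)))"

text \<open>An environmental relation is given by its set of environments Es and its
  set of triples Ts.\<close>
definition env_rel :: "rel set \<Rightarrow> (rel \<times> trm \<times> trm) set \<Rightarrow> bool" where
  "env_rel Es Ts \<longleftrightarrow> (\<forall>E \<in> Es. is_env E) \<and>
     (\<forall>(E, t0, t1) \<in> Ts. is_env E \<and> closed t0 \<and> closed t1)"

definition env_bisim :: "rel set \<Rightarrow> (rel \<times> trm \<times> trm) set \<Rightarrow> bool" where
  "env_bisim Es Ts \<longleftrightarrow> env_rel Es Ts \<and>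
    (\<forall>E t0 t1. (E, t0, t1) \<in> Ts \<longrightarrow>
       (\<forall>t0'. red t0 t0' \<longrightarrow> (\<exists>t1'. reds t1 t1' \<and> (E, t0', t1') \<in> Ts)) \<and>
       (is_val t0 \<longrightarrow> (\<exists>v1. reds t1 v1 \<and> is_val v1 \<and> insert (t0, v1) E \<in> Es)) \<and>
       (stuck t0 \<longrightarrow> (\<exists>t1'. reds t1 t1' \<and> stuck t1' \<and> insert (t0, t1') E \<in> Es)) \<and>
       (\<forall>t1'. red t1 t1' \<longrightarrow> (\<exists>t0'. reds t0 t0' \<and> (E, t0', t1') \<in> Ts)) \<and>
       (is_val t1 \<longrightarrow> (\<exists>v0. reds t0 v0 \<and> is_val v0 \<and> insert (v0, t1) E \<in> Es)) \<and>
       (stuck t1 \<longrightarrow> (\<exists>t0'. reds t0 t0' \<and> stuck t0' \<and> insert (t0', t1) E \<in> Es))) \<and>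
    (\<forall>E \<in> Es.
       (\<forall>s0 s1 v0 v1. (Lam s0, Lam s1) \<in> E \<longrightarrow> is_val v0 \<longrightarrow> is_val v1 \<longrightarrow>
           rtilde E v0 v1 \<longrightarrow> (E, subst0 v0 s0, subst0 v1 s1) \<in> Ts) \<and>
       (\<forall>E0 E1 s0 s1 E0' E1'. is_pctx E0 \<longrightarrow> is_pctx E1 \<longrightarrow>
           (plug E0 (Shift s0), plug E1 (Shift s1)) \<in> E \<longrightarrow>
           is_pctx E0' \<longrightarrow> is_pctx E1' \<longrightarrow> rhat E E0' E1' \<longrightarrow>
           (E, Reset (subst0 (cont2 E0' E0) s0), Reset (subst0 (cont2 E1' E1) s1)) \<in> Ts))"

text \<open>The largest environmental bisimulation (union of all of them):
  approx E t0 t1 means t0 \<approx>_E t1.\<close>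
definition approx :: "rel \<Rightarrow> trm \<Rightarrow> trm \<Rightarrow> bool" where
  "approx E t0 t1 \<longleftrightarrow> (\<exists>Es Ts. env_bisim Es Ts \<and> (E, t0, t1) \<in> Ts)"

definition ctx_equiv :: "trm \<Rightarrow> trm \<Rightarrow> bool" where
  "ctx_equiv t0 t1 \<longleftrightarrow> (\<forall>C. closed (plug C t0) \<longrightarrow> closed (plug C t1) \<longrightarrow>
     ((\<exists>v. evals (plug C t0) v \<and> is_val v) \<longleftrightarrow> (\<exists>v. evals (plug C t1) v \<and> is_val v)) \<and>
     ((\<exists>u. evals (plug C t0) u \<and> stuck u) \<longleftrightarrow> (\<exists>u. evals (plug C t1) u \<and> stuck u)))"

end

theory Submission
  imports Defs
begin

text \<open>Let (Es, Ts) be an environmental bisimulation containing ({}, t0, t1). Relate C[t0]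
  and C[t1] by the constructor closure of the single pair (t0, t1), counting with k the
  occurrences of the pair that the derivation uses (tclosn). As long as no such occurrence is
  in evaluation position, a reduction step of the left term is matched by one on the right,
  preserving the closure. When an occurrence becomes active, the left term is G0[t0] and the
  right one G1[t1] with G0, G1 related by fewer than k occurrences; then G1[t0] is related to
  the left term with fewer occurrences, so by induction it reaches a normal form of the same
  kind, and G1[t0] is related to G1[t1] up to evaluation contexts by the triple ({}, t0, t1).
  The latter relation, which also contains the constructor closures of the environments in Es,
  is a simulation preserving observations: the bisimulation clauses for abstractions and for
  captured continuations are exactly what is needed when a pair of an environment is consumed
  by a redex. Running the argument on the converse bisimulation gives the other direction.\<close>

section \<open>Syntax and reduction\<close>

lemma closedn_mono: "closedn j t \<Longrightarrow> j \<le> k \<Longrightarrow> closedn k t"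
  by (induction j t arbitrary: k rule: closedn.induct) auto

lemma lift_closedn: "closedn j t \<Longrightarrow> j \<le> k \<Longrightarrow> lift k t = t"
  by (induction j t arbitrary: k rule: closedn.induct) auto

lemma subst_closedn: "closedn j t \<Longrightarrow> j \<le> k \<Longrightarrow> subst k u t = t"
  by (induction j t arbitrary: k u rule: closedn.induct) auto

lemma closedn_lift: "closedn n u \<Longrightarrow> closedn (Suc n) (lift k u)"
  by (induction u arbitrary: n k) auto

lemma closedn_subst:
  "closedn (Suc n) t \<Longrightarrow> closedn n u \<Longrightarrow> k \<le> n \<Longrightarrow> closedn n (subst k u t)"
  by (induction t arbitrary: n k u) (auto simp: closedn_lift)

fun ctx_comp :: "ctx \<Rightarrow> ctx \<Rightarrow> ctx" where
  "ctx_comp Hole G = G"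
| "ctx_comp (CLam F) G = CLam (ctx_comp F G)"
| "ctx_comp (CAppR s F) G = CAppR s (ctx_comp F G)"
| "ctx_comp (CAppL F s) G = CAppL (ctx_comp F G) s"
| "ctx_comp (CShift F) G = CShift (ctx_comp F G)"
| "ctx_comp (CReset F) G = CReset (ctx_comp F G)"

lemma ctx_comp_assoc: "ctx_comp (ctx_comp A B) C = ctx_comp A (ctx_comp B C)"
  by (induction A) auto

lemma ctx_comp_Hole [simp]: "ctx_comp F Hole = F"
  by (induction F) auto

lemma plug_ctx_comp [simp]: "plug (ctx_comp F G) x = plug F (plug G x)"
  by (induction F) auto

lemma is_fctx_ctx_comp [simp]: "is_fctx (ctx_comp F G) \<longleftrightarrow> is_fctx F \<and> is_fctx G"
  by (induction F) auto

lemma is_pctx_ctx_comp [simp]: "is_pctx (ctx_comp F G) \<longleftrightarrow> is_pctx F \<and> is_pctx G"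
  by (induction F) auto

lemma is_pctx_imp_is_fctx: "is_pctx E \<Longrightarrow> is_fctx E"
  by (induction E) auto

lemma lift_ctx_ctx_comp:
  "is_fctx F \<Longrightarrow> lift_ctx k (ctx_comp F G) = ctx_comp (lift_ctx k F) (lift_ctx k G)"
  by (induction F arbitrary: k) auto

lemma cont_ctx_comp: "is_fctx F \<Longrightarrow> cont (ctx_comp F G) = cont2 F G"
  unfolding cont_def cont2_def by (simp add: lift_ctx_ctx_comp)

fun closedn_ctx :: "nat \<Rightarrow> ctx \<Rightarrow> bool" where
  "closedn_ctx n Hole = True"
| "closedn_ctx n (CAppR s C) = (closedn n s \<and> closedn_ctx n C)"
| "closedn_ctx n (CAppL C s) = (closedn n s \<and> closedn_ctx n C)"
| "closedn_ctx n (CReset C) = closedn_ctx n C"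
| "closedn_ctx n _ = False"

lemma closedn_plug_fctx:
  "is_fctx F \<Longrightarrow> closedn n (plug F x) \<longleftrightarrow> closedn_ctx n F \<and> closedn n x"
  by (induction F) auto

lemma closedn_ctx_mono: "closedn_ctx j F \<Longrightarrow> j \<le> k \<Longrightarrow> closedn_ctx k F"
  by (induction F) (auto intro: closedn_mono)

lemma lift_ctx_closed: "closedn_ctx 0 F \<Longrightarrow> lift_ctx k F = F"
  by (induction F) (auto intro: lift_closedn)

lemma closedn_ctx_ctx_comp [simp]:
  "closedn_ctx n (ctx_comp F G) \<longleftrightarrow> closedn_ctx n F \<and> closedn_ctx n G"
  by (induction F) auto

lemma cont_closed_ctx: "closedn_ctx 0 E \<Longrightarrow> cont E = Lam (Reset (plug E (Var 0)))"
  unfolding cont_def by (simp add: lift_ctx_closed)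

lemma closedn_cont: "is_pctx E \<Longrightarrow> closedn_ctx 0 E \<Longrightarrow> closedn 0 (cont E)"
  using closedn_ctx_mono[of 0 E 1]
  by (simp add: cont_closed_ctx closedn_plug_fctx is_pctx_imp_is_fctx)

lemma is_val_iff: "is_val v \<longleftrightarrow> (\<exists>t. v = Lam t)"
  by (cases v) auto

inductive contr :: "trm \<Rightarrow> trm \<Rightarrow> bool" where
  beta: "is_val v \<Longrightarrow> contr (App (Lam t) v) (subst0 v t)"
| shift: "is_pctx E \<Longrightarrow> contr (Reset (plug E (Shift t))) (Reset (subst0 (cont E) t))"
| reset: "is_val v \<Longrightarrow> contr (Reset v) v"

definition redex :: "trm \<Rightarrow> bool" where
  "redex r \<longleftrightarrow> (\<exists>r'. contr r r')"

lemma redex_iff: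
  "redex r \<longleftrightarrow> (\<exists>t v. r = App (Lam t) v \<and> is_val v) \<or> (\<exists>v. r = Reset v \<and> is_val v)
     \<or> (\<exists>E t. r = Reset (plug E (Shift t)) \<and> is_pctx E)"
  unfolding redex_def by (blast intro: contr.intros elim: contr.cases)

lemma redex_not_val: "redex r \<Longrightarrow> \<not> is_val r"
  unfolding redex_iff by auto

lemma is_val_plug_fctx: "is_fctx F \<Longrightarrow> is_val (plug F x) \<Longrightarrow> F = Hole"
  by (cases F) auto

lemma plug_fctx_eq_Lam: "is_fctx F \<Longrightarrow> plug F x = Lam t \<longleftrightarrow> F = Hole \<and> x = Lam t"
  by (cases F) auto

lemma plug_pctx_Shift_not_val: "is_pctx E \<Longrightarrow> \<not> is_val (plug E (Shift t))"
  by (cases E) auto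

lemma plug_pctx_Shift_neq_redex:
  "is_pctx E \<Longrightarrow> is_fctx F \<Longrightarrow> redex r \<Longrightarrow> plug E (Shift t) \<noteq> plug F r"
proof (induction E arbitrary: F)
  case Hole
  then show ?case by (cases F) (auto simp: redex_iff)
next
  case (CAppR v E)
  then show ?case
    by (cases F) (auto simp: redex_iff plug_pctx_Shift_not_val dest: is_val_plug_fctx redex_not_val)
next
  case (CAppL E s)
  then show ?case using plug_pctx_Shift_not_val[of E t]
    by (cases F) (auto simp: redex_iff dest: is_val_plug_fctx)
qed auto

lemma redex_plug_redex: "redex r \<Longrightarrow> is_fctx G \<Longrightarrow> redex s \<Longrightarrow> r = plug G s \<Longrightarrow> G = Hole"
proof (cases G)
  case (CReset G')
  assume "redex r" "is_fctx G" "redex s" "r = plug G s"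
  with CReset have "is_fctx G'" "is_val (plug G' s) \<or> (\<exists>E t. is_pctx E \<and> plug G' s = plug E (Shift t))"
    unfolding redex_iff by auto
  then show ?thesis
    using is_val_plug_fctx[of G' s] redex_not_val[OF \<open>redex s\<close>] plug_pctx_Shift_neq_redex \<open>redex s\<close>
    by fastforce
qed (auto simp: redex_iff plug_fctx_eq_Lam dest: is_val_plug_fctx redex_not_val)

lemma fctx_redex_decomp_unique:
  "is_fctx F \<Longrightarrow> is_fctx G \<Longrightarrow> redex r \<Longrightarrow> redex s \<Longrightarrow> plug F r = plug G s \<Longrightarrow> F = G \<and> r = s"
proof (induction F arbitrary: G)
  case Hole
  then show ?case using redex_plug_redex[of r G s] by auto
next
  case (CAppR v F)
  then show ?case
    by (cases G) (auto dest: redex_plug_redex[of _ "CAppR v F"] redex_not_val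
        simp: is_val_iff plug_fctx_eq_Lam)
next
  case (CAppL F t)
  then show ?case
    by (cases G) (auto dest: redex_plug_redex[of _ "CAppL F t"] redex_not_val
        simp: is_val_iff plug_fctx_eq_Lam)
next
  case (CReset F)
  then show ?case
    by (cases G) (auto dest: redex_plug_redex[of _ "CReset F"])
qed auto

lemma plug_pctx_Shift_inj:
  "is_pctx E \<Longrightarrow> is_pctx E' \<Longrightarrow> plug E (Shift t) = plug E' (Shift t') \<Longrightarrow> E = E' \<and> t = t'"
proof (induction E arbitrary: E')
  case Hole
  then show ?case by (cases E') auto
next
  case (CAppR v E)
  then show ?case by (cases E') (auto dest: plug_pctx_Shift_not_val)
next
  case (CAppL E s)
  then show ?case using plug_pctx_Shift_not_val[of E t] by (cases E') auto
qed auto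

lemma contr_deterministic: "contr r u1 \<Longrightarrow> contr r u2 \<Longrightarrow> u1 = u2"
  by (auto elim!: contr.cases dest: plug_pctx_Shift_inj plug_pctx_Shift_not_val)

lemma red_iff_contr: "red t u \<longleftrightarrow> (\<exists>F r r'. is_fctx F \<and> contr r r' \<and> t = plug F r \<and> u = plug F r')"
proof
  show "red t u \<Longrightarrow> \<exists>F r r'. is_fctx F \<and> contr r r' \<and> t = plug F r \<and> u = plug F r'"
    by (blast elim: red.cases intro: contr.intros)
qed (auto elim!: contr.cases intro: red.intros)

lemma red_deterministic:
  assumes "red t u1" and "red t u2"
  shows "u1 = u2"
proof -
  obtain F r r' G s s' where
    "is_fctx F" "contr r r'" "t = plug F r" "u1 = plug F r'"
    "is_fctx G" "contr s s'" "t = plug G s" "u2 = plug G s'"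
    using assms unfolding red_iff_contr by blast
  moreover from this have "F = G \<and> r = s"
    using fctx_redex_decomp_unique unfolding redex_def by blast
  ultimately show ?thesis using contr_deterministic by blast
qed

lemma red_plug_fctx: "red a b \<Longrightarrow> is_fctx F \<Longrightarrow> red (plug F a) (plug F b)"
  unfolding red_iff_contr by (metis is_fctx_ctx_comp plug_ctx_comp)

lemma reds_plug_fctx: "reds a b \<Longrightarrow> is_fctx F \<Longrightarrow> reds (plug F a) (plug F b)"
  by (induction rule: rtranclp_induct) (auto intro: rtranclp.rtrancl_into_rtrancl red_plug_fctx)

lemma redex_reducible: "is_fctx F \<Longrightarrow> redex r \<Longrightarrow> \<not> irreducible (plug F r)"
  unfolding irreducible_def redex_def red_iff_contr by blast

lemma val_irreducible: "is_val v \<Longrightarrow> irreducible v"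
  unfolding irreducible_def red_iff_contr
  using is_val_plug_fctx redex_not_val unfolding redex_def by fastforce

lemma stuck_plug_pctx_Shift: "is_pctx E \<Longrightarrow> stuck (plug E (Shift t))"
  unfolding stuck_def irreducible_def red_iff_contr
  using plug_pctx_Shift_not_val plug_pctx_Shift_neq_redex unfolding redex_def by blast

lemma irreducible_plug_fctx: "is_fctx F \<Longrightarrow> irreducible (plug F t) \<Longrightarrow> irreducible t"
  unfolding irreducible_def using red_plug_fctx by blast

lemma closed_irreducible_plug_Shift:
  "closedn 0 t \<Longrightarrow> irreducible t \<Longrightarrow> \<not> is_val t \<Longrightarrow> \<exists>E s. is_pctx E \<and> t = plug E (Shift s)"
proof (induction t)
  case (App a b)
  have "irreducible a" "is_val a \<Longrightarrow> irreducible b"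
    using App.prems(2) irreducible_plug_fctx[of "CAppL Hole b" a] irreducible_plug_fctx[of "CAppR a Hole" b]
    by auto
  moreover have "\<not> (is_val a \<and> is_val b)"
    using App.prems(2) redex_reducible[of Hole "App a b"] by (auto simp: redex_iff is_val_iff)
  ultimately consider E s where "is_pctx E" "a = plug E (Shift s)"
    | E s where "is_val a" "is_pctx E" "b = plug E (Shift s)"
    using App by auto
  then show ?case
  proof cases
    case 1
    then show ?thesis by (intro exI[of _ "CAppL E b"]) auto
  next
    case 2
    then show ?thesis by (intro exI[of _ "CAppR a E"]) auto
  qed
next
  case (Shift t)
  then show ?case by (intro exI[of _ Hole]) auto
next
  case (Reset a)
  have "irreducible a" using Reset.prems(2) irreducible_plug_fctx[of "CReset Hole" a] by simp
  with Reset have "redex (Reset a)" by (auto simp: redex_iff)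
  with Reset.prems(2) show ?case using redex_reducible[of Hole] by simp
qed auto

lemma closed_stuck_iff:
  "closedn 0 t \<Longrightarrow> stuck t \<longleftrightarrow> (\<exists>E s. is_pctx E \<and> t = plug E (Shift s))"
  using closed_irreducible_plug_Shift stuck_plug_pctx_Shift unfolding stuck_def by blast

lemma closedn_contr: "contr r r' \<Longrightarrow> closedn 0 r \<Longrightarrow> closedn 0 r'"
proof (induction rule: contr.induct)
  case (shift E t)
  then show ?case
    using closedn_plug_fctx[of E 0] is_pctx_imp_is_fctx closedn_cont closedn_subst[of 0]
    by fastforce
qed (auto intro: closedn_subst)

lemma red_closedn: "red t u \<Longrightarrow> closedn 0 t \<Longrightarrow> closedn 0 u"
  unfolding red_iff_contr using closedn_contr closedn_plug_fctx by blast

lemma reds_closedn: "reds t u \<Longrightarrow> closedn 0 t \<Longrightarrow> closedn 0 u"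
  by (induction rule: rtranclp_induct) (auto intro: red_closedn)

section \<open>Constructor closure with a count of the leaves used\<close>

inductive tclosn :: "rel \<Rightarrow> nat \<Rightarrow> trm \<Rightarrow> trm \<Rightarrow> bool" for Q where
  base: "(s, t) \<in> Q \<Longrightarrow> tclosn Q (Suc 0) s t"
| var: "tclosn Q 0 (Var i) (Var i)"
| lam: "tclosn Q k s t \<Longrightarrow> tclosn Q k (Lam s) (Lam t)"
| shft: "tclosn Q k s t \<Longrightarrow> tclosn Q k (Shift s) (Shift t)"
| rst: "tclosn Q k s t \<Longrightarrow> tclosn Q k (Reset s) (Reset t)"
| app: "tclosn Q k s t \<Longrightarrow> tclosn Q k' s' t' \<Longrightarrow> tclosn Q (k + k') (App s s') (App t t')"

lemma tclosn_LamE: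
  assumes "tclosn Q k (Lam s) q"
  obtains (leaf) "(Lam s, q) \<in> Q" "k = Suc 0" | (lam) t where "q = Lam t" "tclosn Q k s t"
  using assms by (cases rule: tclosn.cases) auto

lemma tclosn_ShiftE:
  assumes "tclosn Q k (Shift s) q"
  obtains (leaf) "(Shift s, q) \<in> Q" "k = Suc 0" | (shft) t where "q = Shift t" "tclosn Q k s t"
  using assms by (cases rule: tclosn.cases) auto

lemma tclosn_ResetE:
  assumes "tclosn Q k (Reset s) q"
  obtains (leaf) "(Reset s, q) \<in> Q" "k = Suc 0" | (rst) t where "q = Reset t" "tclosn Q k s t"
  using assms by (cases rule: tclosn.cases) auto

lemma tclosn_AppE:
  assumes "tclosn Q k (App s s') q"
  obtains (leaf) "(App s s', q) \<in> Q" "k = Suc 0"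
  | (app) k1 t k2 t' where "q = App t t'" "tclosn Q k1 s t" "tclosn Q k2 s' t'" "k = k1 + k2"
  using assms by (cases rule: tclosn.cases) auto

lemma tclos_iff_tclosn: "tclos Q s t \<longleftrightarrow> (\<exists>k. tclosn Q k s t)"
proof
  show "tclos Q s t \<Longrightarrow> \<exists>k. tclosn Q k s t"
    by (induction rule: tclos.induct) (auto intro: tclosn.intros)
  assume "\<exists>k. tclosn Q k s t"
  then obtain k where "tclosn Q k s t" ..
  then show "tclos Q s t"
    by (induction rule: tclosn.induct) (auto intro: tclos.intros)
qed

lemma tclosn_refl: "tclosn Q 0 t t"
  by (induction t) (auto intro: tclosn.intros dest: tclosn.app[where k = 0 and k' = 0, simplified])

lemma tclosn_converse: "tclosn Q k s t \<Longrightarrow> tclosn (Q\<inverse>) k t s"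
  by (induction rule: tclosn.induct) (auto intro: tclosn.intros)

lemma tclosn_val_leaf:
  "tclosn Q k v v1 \<Longrightarrow> is_val v \<Longrightarrow> \<not> is_val v1 \<Longrightarrow> (v, v1) \<in> Q \<and> k = Suc 0"
  by (auto simp: is_val_iff elim: tclosn_LamE)

definition closed_rel :: "rel \<Rightarrow> bool" where
  "closed_rel Q \<longleftrightarrow> (\<forall>(a, b) \<in> Q. closedn 0 a \<and> closedn 0 b)"

lemma tclosn_lift: "tclosn Q k u u1 \<Longrightarrow> closed_rel Q \<Longrightarrow> tclosn Q k (lift n u) (lift n u1)"
proof (induction arbitrary: n rule: tclosn.induct)
  case (base s t)
  then show ?case
    unfolding closed_rel_def using lift_closedn[of 0] by (fastforce intro: tclosn.base)
qed (auto intro: tclosn.intros)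

lemma tclosn_subst:
  "tclosn Q k t t1 \<Longrightarrow> closed_rel Q \<Longrightarrow> tclosn Q j u u1 \<Longrightarrow>
    \<exists>k'. tclosn Q k' (subst n u t) (subst n u1 t1)"
proof (induction arbitrary: n u u1 j rule: tclosn.induct)
  case (base s t)
  then show ?case
    unfolding closed_rel_def using subst_closedn[of 0] by (fastforce intro: tclosn.base)
next
  case (app k s t k' s' t')
  then obtain a b where "tclosn Q a (subst n u s) (subst n u1 t)"
    and "tclosn Q b (subst n u s') (subst n u1 t')"
    by blast
  then show ?case by (auto intro: tclosn.app)
next
  case (var i)
  then show ?case by (auto intro: tclosn.intros tclosn_refl)
qed (simp, meson tclosn.intros tclosn_lift)+

inductive cclosn :: "rel \<Rightarrow> nat \<Rightarrow> ctx \<Rightarrow> ctx \<Rightarrow> bool" for Q where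
  hole: "cclosn Q 0 Hole Hole"
| argr: "tclosn Q j v v1 \<Longrightarrow> is_val v1 \<Longrightarrow> cclosn Q k F F1 \<Longrightarrow>
    cclosn Q (j + k) (CAppR v F) (CAppR v1 F1)"
| funl: "tclosn Q j s s1 \<Longrightarrow> cclosn Q k F F1 \<Longrightarrow> cclosn Q (j + k) (CAppL F s) (CAppL F1 s1)"
| rst: "cclosn Q k F F1 \<Longrightarrow> cclosn Q k (CReset F) (CReset F1)"

lemma cclosn_plug: "cclosn Q k F F1 \<Longrightarrow> tclosn Q j x x1 \<Longrightarrow> tclosn Q (k + j) (plug F x) (plug F1 x1)"
proof (induction arbitrary: j rule: cclosn.induct)
  case (argr j' v v1 k F F1)
  then show ?case using tclosn.app[of Q j' v v1 "k + j"] by (simp add: add.assoc)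
next
  case (funl j' s s1 k F F1)
  then show ?case using tclosn.app[of Q "k + j" _ _ j' s s1] by (simp add: ac_simps)
qed (auto intro: tclosn.intros)

lemma cclosn_is_fctx: "cclosn Q k F F1 \<Longrightarrow> is_fctx F \<Longrightarrow> is_fctx F1"
  by (induction rule: cclosn.induct) auto

lemma cclosn_is_pctx: "cclosn Q k F F1 \<Longrightarrow> is_pctx F \<Longrightarrow> is_pctx F1"
  by (induction rule: cclosn.induct) auto

lemma cclosn_ctx_comp:
  "cclosn Q k A A1 \<Longrightarrow> cclosn Q j B B1 \<Longrightarrow> cclosn Q (k + j) (ctx_comp A B) (ctx_comp A1 B1)"
  by (induction arbitrary: j rule: cclosn.induct)
    (auto simp: add.assoc intro: cclosn.intros)

lemma cclosn_refl: "is_fctx F \<Longrightarrow> cclosn Q 0 F F"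
proof (induction F)
  case (CAppR v F)
  then show ?case using cclosn.argr[of Q 0 v v 0 F F] tclosn_refl by simp
next
  case (CAppL F s)
  then show ?case using cclosn.funl[of Q 0 s s 0 F F] tclosn_refl by simp
qed (auto intro: cclosn.intros)

lemma tclosn_mono: "tclosn Q k s t \<Longrightarrow> Q \<subseteq> Q' \<Longrightarrow> tclosn Q' k s t"
  by (induction rule: tclosn.induct) (auto intro: tclosn.intros)

lemma cclosn_mono: "cclosn Q k F F1 \<Longrightarrow> Q \<subseteq> Q' \<Longrightarrow> cclosn Q' k F F1"
  by (induction rule: cclosn.induct) (auto intro: cclosn.intros tclosn_mono)

lemma tclosn_cont:
  "cclosn Q k E E1 \<Longrightarrow> is_pctx E \<Longrightarrow> closedn_ctx 0 E \<Longrightarrow> closedn_ctx 0 E1 \<Longrightarrow>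
    tclosn Q k (cont E) (cont E1)"
  using cclosn_plug[of Q k E E1 0 "Var 0" "Var 0"]
  by (simp add: cont_closed_ctx tclosn.intros)

lemma rhat_if_cclosn:
  "cclosn Q k F F1 \<Longrightarrow> is_fctx F \<Longrightarrow> closedn_ctx 0 F \<Longrightarrow> closedn_ctx 0 F1 \<Longrightarrow> rhat Q F F1"
  by (induction rule: cclosn.induct)
    (auto intro!: rhat.intros simp: rtilde_def closed_def tclos_iff_tclosn)

text \<open>The three ways in which a derivation of tclosn Q k (plug F x) q can treat the
  evaluation context F: a leaf of Q swallows the hole, a leaf of Q relates a value of F to a
  non-value (so the related context is no evaluation context), or the derivation follows F
  down to the hole.\<close>
definition fctx_split :: "rel \<Rightarrow> nat \<Rightarrow> ctx \<Rightarrow> trm \<Rightarrow> trm \<Rightarrow> bool" where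
  "fctx_split Q k F x q \<longleftrightarrow>
    (\<exists>Fa Fb F1 q1 j. F = ctx_comp Fa Fb \<and> (plug Fb x, q1) \<in> Q \<and> q = plug F1 q1 \<and>
        cclosn Q j Fa F1 \<and> j < k) \<or>
    (\<exists>G0 G1 j v v1. (v, v1) \<in> Q \<and> is_val v \<and> \<not> is_val v1 \<and> plug F x = plug G0 v \<and>
        q = plug G1 v1 \<and> is_fctx G0 \<and> cclosn Q j G0 G1 \<and> j < k) \<or>
    (\<exists>F1 x1 j1 j2. q = plug F1 x1 \<and> cclosn Q j1 F F1 \<and> tclosn Q j2 x x1 \<and> j1 + j2 = k)"

lemma fctx_split_frame:
  assumes split: "fctx_split Q k F x q" and f: "cclosn Q j f f1" "is_fctx f"
  shows "fctx_split Q (j + k) (ctx_comp f F) x (plug f1 q)"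
  using split[unfolded fctx_split_def]
proof (elim disjE exE conjE)
  fix Fa Fb F1 q1 i
  assume "F = ctx_comp Fa Fb" "(plug Fb x, q1) \<in> Q" "q = plug F1 q1" "cclosn Q i Fa F1" "i < k"
  moreover have "cclosn Q (j + i) (ctx_comp f Fa) (ctx_comp f1 F1)"
    using cclosn_ctx_comp[OF f(1) \<open>cclosn Q i Fa F1\<close>] .
  ultimately show ?thesis unfolding fctx_split_def
    by (metis add_less_cancel_left ctx_comp_assoc plug_ctx_comp)
next
  fix G0 G1 i v v1
  assume "(v, v1) \<in> Q" "is_val v" "\<not> is_val v1" "plug F x = plug G0 v" "q = plug G1 v1"
    "is_fctx G0" "cclosn Q i G0 G1" "i < k"
  moreover have "cclosn Q (j + i) (ctx_comp f G0) (ctx_comp f1 G1)"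
    using cclosn_ctx_comp[OF f(1) \<open>cclosn Q i G0 G1\<close>] .
  ultimately show ?thesis unfolding fctx_split_def using f(2)
    by (metis add_less_cancel_left is_fctx_ctx_comp plug_ctx_comp)
next
  fix F1 x1 j1 j2
  assume "q = plug F1 x1" "cclosn Q j1 F F1" "tclosn Q j2 x x1" "j1 + j2 = k"
  moreover have "cclosn Q (j + j1) (ctx_comp f F) (ctx_comp f1 F1)"
    using cclosn_ctx_comp[OF f(1) \<open>cclosn Q j1 F F1\<close>] .
  ultimately show ?thesis unfolding fctx_split_def
    by (metis add.assoc plug_ctx_comp)
qed

lemma fctx_split_leaf: "(plug F x, q) \<in> Q \<Longrightarrow> fctx_split Q (Suc 0) F x q"
  unfolding fctx_split_def using cclosn.hole[of Q] by force

lemma fctx_split_val_leaf: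
  "(v, v1) \<in> Q \<Longrightarrow> is_val v \<Longrightarrow> \<not> is_val v1 \<Longrightarrow> plug F x = plug G0 v \<Longrightarrow> q = plug G1 v1 \<Longrightarrow>
    is_fctx G0 \<Longrightarrow> cclosn Q j G0 G1 \<Longrightarrow> j < k \<Longrightarrow> fctx_split Q k F x q"
  unfolding fctx_split_def by blast

lemma fctx_split_val_arg:
  assumes "(v, v1) \<in> Q" "is_val v" "\<not> is_val v1" and "tclosn Q k (plug F x) q"
  shows "fctx_split Q (Suc k) (CAppR v F) x (App v1 q)"
proof -
  have "cclosn Q k (CAppL Hole (plug F x)) (CAppL Hole q)"
    using cclosn.funl[OF assms(4) cclosn.hole] by simp
  then show ?thesis
    using fctx_split_val_leaf[of v v1 Q "CAppR v F" x "CAppL Hole (plug F x)" "App v1 q"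
        "CAppL Hole q" k "Suc k"] assms
    by simp
qed

lemma fctx_split_hole:
  "q = plug F1 x1 \<Longrightarrow> cclosn Q j1 F F1 \<Longrightarrow> tclosn Q j2 x x1 \<Longrightarrow> fctx_split Q (j1 + j2) F x q"
  unfolding fctx_split_def by blast

lemma tclosn_plug_fctx_split: "tclosn Q k (plug F x) q \<Longrightarrow> is_fctx F \<Longrightarrow> fctx_split Q k F x q"
proof (induction F arbitrary: k q)
  case Hole
  then show ?case using fctx_split_hole[OF _ cclosn.hole] by simp
next
  case (CAppR v F)
  from CAppR.prems(1) have "tclosn Q k (App v (plug F x)) q" by simp
  then show ?case
  proof (cases rule: tclosn_AppE)
    case (app k1 v1 k2 q')
    show ?thesis
    proof (cases "is_val v1")
      case True
      have "cclosn Q k1 (CAppR v Hole) (CAppR v1 Hole)"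
        using cclosn.argr[OF \<open>tclosn Q k1 v v1\<close> True cclosn.hole] by simp
      moreover have "fctx_split Q k2 F x q'" using CAppR app by simp
      ultimately show ?thesis
        using fctx_split_frame[of Q k2 F x q' k1 "CAppR v Hole" "CAppR v1 Hole"] CAppR.prems(2) app
        by simp
    next
      case False
      with CAppR app have "(v, v1) \<in> Q" "k1 = Suc 0" using tclosn_val_leaf by auto
      then show ?thesis using fctx_split_val_arg CAppR.prems(2) False app by auto
    qed
  qed (auto intro: fctx_split_leaf)
next
  case (CAppL F s)
  from CAppL.prems(1) have "tclosn Q k (App (plug F x) s) q" by simp
  then show ?case
  proof (cases rule: tclosn_AppE)
    case (app k1 q' k2 s1)
    have "cclosn Q k2 (CAppL Hole s) (CAppL Hole s1)"
      using cclosn.funl[OF \<open>tclosn Q k2 s s1\<close> cclosn.hole] by simp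
    moreover have "fctx_split Q k1 F x q'" using CAppL app by simp
    ultimately show ?thesis
      using fctx_split_frame[of Q k1 F x q' k2 "CAppL Hole s" "CAppL Hole s1"] app
      by (simp add: add.commute)
  qed (auto intro: fctx_split_leaf)
next
  case (CReset F)
  from CReset.prems(1) have "tclosn Q k (Reset (plug F x)) q" by simp
  then show ?case
  proof (cases rule: tclosn_ResetE)
    case (rst q')
    with CReset show ?thesis
      using fctx_split_frame[of Q k F x q' 0 "CReset Hole" "CReset Hole"] cclosn.rst[OF cclosn.hole]
      by simp
  qed (auto intro: fctx_split_leaf)
qed auto

section \<open>Active leaves\<close>

definition active :: "rel \<Rightarrow> nat \<Rightarrow> trm \<Rightarrow> trm \<Rightarrow> bool" where
  "active Q k p q \<longleftrightarrow> (\<exists>G0 G1 j a b. (a, b) \<in> Q \<and> p = plug G0 a \<and> q = plug G1 b \<and>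
     is_fctx G0 \<and> cclosn Q j G0 G1 \<and> j < k)"

lemma activeI:
  "(a, b) \<in> Q \<Longrightarrow> is_fctx G0 \<Longrightarrow> cclosn Q j G0 G1 \<Longrightarrow> j < k \<Longrightarrow>
    active Q k (plug G0 a) (plug G1 b)"
  unfolding active_def by blast

lemma active_leaf: "(p, q) \<in> Q \<Longrightarrow> active Q (Suc 0) p q"
  using activeI[of p q Q Hole 0 Hole] cclosn.hole by simp

lemma active_plug:
  assumes "active Q j p q" "cclosn Q i F F1" "is_fctx F" "i + j \<le> k"
  shows "active Q k (plug F p) (plug F1 q)"
proof -
  obtain G0 G1 l a b where "(a, b) \<in> Q" "p = plug G0 a" "q = plug G1 b" "is_fctx G0"
    "cclosn Q l G0 G1" "l < j"
    using assms(1) unfolding active_def by blast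
  then show ?thesis
    using activeI[of a b Q "ctx_comp F G0" "i + l" "ctx_comp F1 G1" k] cclosn_ctx_comp assms
    by auto
qed

lemma tclosn_plug_fctx_cases:
  assumes "tclosn Q k (plug F x) q" "is_fctx F"
  obtains (active) "active Q k (plug F x) q"
  | (hole) F1 x1 j1 j2 where "q = plug F1 x1" "cclosn Q j1 F F1" "tclosn Q j2 x x1" "j1 + j2 = k"
proof -
  have "fctx_split Q k F x q" using tclosn_plug_fctx_split assms .
  then show thesis
    unfolding fctx_split_def
  proof (elim disjE exE conjE)
    fix Fa Fb F1 q1 j
    assume "F = ctx_comp Fa Fb" "(plug Fb x, q1) \<in> Q" "q = plug F1 q1" "cclosn Q j Fa F1" "j < k"
    then show thesis using that(1) activeI[of "plug Fb x" q1 Q Fa j F1 k] assms(2) by simp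
  next
    fix G0 G1 j v v1
    assume "(v, v1) \<in> Q" "plug F x = plug G0 v" "q = plug G1 v1" "is_fctx G0"
      "cclosn Q j G0 G1" "j < k"
    then show thesis using that(1) activeI[of v v1 Q G0 j G1 k] by simp
  qed (rule that(2))
qed

lemma tclosn_val_or_active: "tclosn Q k p q \<Longrightarrow> is_val p \<Longrightarrow> is_val q \<or> active Q k p q"
  by (auto simp: is_val_iff elim: tclosn_LamE intro: active_leaf)

lemma tclosn_stuck_cases:
  assumes tc: "tclosn Q k p q" and "closedn 0 p" "stuck p"
  obtains (stuck) "stuck q"
  | (stuck_leaf) G0 G1 j a b where "(a, b) \<in> Q" "stuck a" "p = plug G0 a" "q = plug G1 b"
      "is_pctx G0" "cclosn Q j G0 G1" "j < k"
  | (val_leaf) G0 G1 j a b where "(a, b) \<in> Q" "is_val a" "\<not> is_val b" "p = plug G0 a"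
      "q = plug G1 b" "is_fctx G0" "cclosn Q j G0 G1" "j < k"
proof -
  obtain E s where E: "is_pctx E" "p = plug E (Shift s)"
    using assms closed_stuck_iff by blast
  have "fctx_split Q k E (Shift s) q"
    using tclosn_plug_fctx_split tc E is_pctx_imp_is_fctx by blast
  then show thesis
    unfolding fctx_split_def
  proof (elim disjE exE conjE)
    fix Ea Eb E1 c j
    assume "E = ctx_comp Ea Eb" "(plug Eb (Shift s), c) \<in> Q" "q = plug E1 c" "cclosn Q j Ea E1" "j < k"
    then show thesis using stuck_leaf E stuck_plug_pctx_Shift by auto
  next
    fix G0 G1 j v v1
    assume "(v, v1) \<in> Q" "is_val v" "\<not> is_val v1" "plug E (Shift s) = plug G0 v" "q = plug G1 v1"
      "is_fctx G0" "cclosn Q j G0 G1" "j < k"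
    then show thesis using val_leaf E by auto
  next
    fix E1 z i1 i2
    assume hole: "q = plug E1 z" "cclosn Q i1 E E1" "tclosn Q i2 (Shift s) z" "i1 + i2 = k"
    from \<open>tclosn Q i2 (Shift s) z\<close> show thesis
    proof (cases rule: tclosn_ShiftE)
      case leaf
      then show thesis
        using stuck_leaf[of "Shift s" z E E1 i1] hole E stuck_plug_pctx_Shift[of Hole] by auto
    next
      case (shft s1)
      then show thesis using stuck hole E stuck_plug_pctx_Shift cclosn_is_pctx by auto
    qed
  qed
qed

lemma tclosn_stuck_or_active:
  "tclosn Q k p q \<Longrightarrow> closedn 0 p \<Longrightarrow> stuck p \<Longrightarrow> stuck q \<or> active Q k p q"
  by (erule tclosn_stuck_cases) (auto intro: activeI is_pctx_imp_is_fctx)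

lemma tclosn_beta_or_active:
  assumes tc: "tclosn Q k (App (Lam b) v) x1" and v: "is_val v" and Q: "closed_rel Q"
  shows "(\<exists>x1' k'. contr x1 x1' \<and> tclosn Q k' (subst0 v b) x1') \<or> active Q k (App (Lam b) v) x1"
  using tc
proof (cases rule: tclosn_AppE)
  case leaf
  then show ?thesis using active_leaf by simp
next
  case (app k1 y k2 z)
  from \<open>tclosn Q k1 (Lam b) y\<close> show ?thesis
  proof (cases rule: tclosn_LamE)
    case leaf
    have "cclosn Q k2 (CAppL Hole v) (CAppL Hole z)"
      using cclosn.funl[OF \<open>tclosn Q k2 v z\<close> cclosn.hole] by simp
    then show ?thesis using activeI[of "Lam b" y Q "CAppL Hole v" k2 "CAppL Hole z" k] leaf app by simp
  next
    case (lam b1)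
    show ?thesis
    proof (cases "is_val z")
      case True
      obtain k' where "tclosn Q k' (subst0 v b) (subst0 z b1)"
        using tclosn_subst[OF \<open>tclosn Q k1 b b1\<close> Q \<open>tclosn Q k2 v z\<close>] by blast
      then show ?thesis using contr.beta[OF True] app lam by blast
    next
      case False
      then have "(v, z) \<in> Q" "k2 = Suc 0" using tclosn_val_leaf app v by auto
      moreover have "cclosn Q k1 (CAppR (Lam b) Hole) (CAppR (Lam b1) Hole)"
        using cclosn.argr[OF \<open>tclosn Q k1 (Lam b) y\<close> _ cclosn.hole] lam by simp
      ultimately show ?thesis
        using activeI[of v z Q "CAppR (Lam b) Hole" k1 "CAppR (Lam b1) Hole" k] app lam by simp
    qed
  qed
qed

lemma tclosn_reset_or_active:
  assumes tc: "tclosn Q k (Reset v) x1" and v: "is_val v"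
  shows "(\<exists>x1' k'. contr x1 x1' \<and> tclosn Q k' v x1') \<or> active Q k (Reset v) x1"
  using tc
proof (cases rule: tclosn_ResetE)
  case leaf
  then show ?thesis using active_leaf by simp
next
  case (rst y)
  show ?thesis
  proof (cases "is_val y")
    case True
    then show ?thesis using contr.reset rst by blast
  next
    case False
    then have "(v, y) \<in> Q" using tclosn_val_leaf rst v by auto
    then show ?thesis
      using activeI[of v y Q "CReset Hole" 0 "CReset Hole" k] cclosn.rst[OF cclosn.hole] rst
        tclosn_val_leaf[of Q k v y] v False
      by simp
  qed
qed

lemma tclosn_shift_or_active:
  assumes tc: "tclosn Q k (Reset (plug E (Shift b))) x1" and E: "is_pctx E" and Q: "closed_rel Q"
    and cl: "closedn 0 (plug E (Shift b))" "closedn 0 x1"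
  shows "(\<exists>x1' k'. contr x1 x1' \<and> tclosn Q k' (Reset (subst0 (cont E) b)) x1')
    \<or> active Q k (Reset (plug E (Shift b))) x1"
  using tc
proof (cases rule: tclosn_ResetE)
  case leaf
  then show ?thesis using active_leaf by simp
next
  case (rst y)
  have cR: "cclosn Q 0 (CReset Hole) (CReset Hole)" using cclosn.rst[OF cclosn.hole] .
  from \<open>tclosn Q k (plug E (Shift b)) y\<close> is_pctx_imp_is_fctx[OF E] show ?thesis
  proof (cases rule: tclosn_plug_fctx_cases)
    case active
    then show ?thesis using active_plug[OF _ cR] rst by fastforce
  next
    case (hole E1 z i1 i2)
    from \<open>tclosn Q i2 (Shift b) z\<close> show ?thesis
    proof (cases rule: tclosn_ShiftE)
      case leaf
      then show ?thesis
        using activeI[of "Shift b" z Q "CReset E" i1 "CReset E1" k] cclosn.rst hole rst E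
          is_pctx_imp_is_fctx
        by auto
    next
      case (shft b1)
      have E1: "is_pctx E1" using cclosn_is_pctx hole E by blast
      have "closedn_ctx 0 E" "closedn_ctx 0 E1"
        using cl rst hole E E1 closedn_plug_fctx is_pctx_imp_is_fctx by auto
      then have "tclosn Q i1 (cont E) (cont E1)" using tclosn_cont hole E by blast
      then obtain k' where "tclosn Q k' (subst0 (cont E) b) (subst0 (cont E1) b1)"
        using tclosn_subst[OF \<open>tclosn Q i2 b b1\<close> Q] by blast
      then show ?thesis using contr.shift[OF E1] rst hole shft by (blast intro: tclosn.rst)
    qed
  qed
qed

lemma tclosn_contr_or_active:
  assumes "tclosn Q k r x1" "contr r r'" "closed_rel Q" "closedn 0 r" "closedn 0 x1"
  shows "(\<exists>x1' k'. contr x1 x1' \<and> tclosn Q k' r' x1') \<or> active Q k r x1"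
  using assms(2)
proof cases
  case (beta v t)
  then show ?thesis using tclosn_beta_or_active assms by simp
next
  case (shift E t)
  then show ?thesis using tclosn_shift_or_active assms by simp
next
  case reset
  then show ?thesis using tclosn_reset_or_active assms by simp
qed

lemma tclosn_red_or_active:
  assumes Q: "closed_rel Q" and tc: "tclosn Q k p q" and cl: "closedn 0 p" "closedn 0 q"
    and "red p p'"
  shows "(\<exists>q' k'. red q q' \<and> tclosn Q k' p' q') \<or> active Q k p q"
proof -
  obtain F r r' where F: "is_fctx F" "contr r r'" "p = plug F r" "p' = plug F r'"
    using \<open>red p p'\<close> unfolding red_iff_contr by blast
  from tc[unfolded F(3)] F(1) show ?thesis
  proof (cases rule: tclosn_plug_fctx_cases)
    case active
    then show ?thesis using F by simp
  next
    case (hole F1 x1 j1 j2)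
    have F1: "is_fctx F1" using cclosn_is_fctx hole F by blast
    have "closedn 0 r" "closedn 0 x1" using cl F F1 hole closedn_plug_fctx by auto
    with tclosn_contr_or_active[OF \<open>tclosn Q j2 r x1\<close> F(2) Q]
    consider x1' k' where "contr x1 x1'" "tclosn Q k' r' x1'" | "active Q j2 r x1"
      by blast
    then show ?thesis
    proof cases
      case 1
      then have "red q (plug F1 x1')" using red_iff_contr F1 hole by blast
      moreover have "tclosn Q (j1 + k') p' (plug F1 x1')" using cclosn_plug hole 1 F by simp
      ultimately show ?thesis by blast
    next
      case 2
      then show ?thesis using active_plug hole F by auto
    qed
  qed
qed

section \<open>Environments and the up-to-context simulation\<close>

lemma is_envD:
  "is_env E \<Longrightarrow> (a, b) \<in> E \<Longrightarrow>
    closedn 0 a \<and> closedn 0 b \<and> (is_val a \<and> is_val b \<or> stuck a \<and> stuck b)"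
  unfolding is_env_def closed_def by auto

lemma closed_rel_if_is_env: "is_env E \<Longrightarrow> closed_rel E"
  unfolding closed_rel_def by (auto dest: is_envD)

lemma is_env_irreducible: "is_env E \<Longrightarrow> (a, b) \<in> E \<Longrightarrow> irreducible a"
  using is_envD val_irreducible unfolding stuck_def by blast

lemma is_env_not_redex: "is_env E \<Longrightarrow> (plug F r, b) \<in> E \<Longrightarrow> is_fctx F \<Longrightarrow> \<not> redex r"
  using is_env_irreducible redex_reducible by blast

lemma is_env_tclosn_val: "is_env E \<Longrightarrow> tclosn E k v v1 \<Longrightarrow> is_val v \<Longrightarrow> is_val v1"
  using tclosn_val_leaf is_envD unfolding stuck_def by metis

lemma is_env_stuck:
  assumes "is_env E" "(a, b) \<in> E" "stuck a"
  shows "\<exists>Eb s. is_pctx Eb \<and> b = plug Eb (Shift s)"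
proof -
  have "closedn 0 b" "stuck b" using is_envD[OF assms(1,2)] assms(3) unfolding stuck_def by auto
  then show ?thesis using closed_stuck_iff by blast
qed

lemma is_env_tclosn_plug_redex:
  assumes E: "is_env E" and tc: "tclosn E k (plug F r) q" and F: "is_fctx F" and r: "redex r"
  obtains F1 x1 j1 j2 where "q = plug F1 x1" "cclosn E j1 F F1" "tclosn E j2 r x1"
proof -
  have "fctx_split E k F r q" using tclosn_plug_fctx_split tc F .
  then show thesis
    unfolding fctx_split_def
  proof (elim disjE exE conjE)
    fix Fa Fb F1 q1 j
    assume "F = ctx_comp Fa Fb" "(plug Fb r, q1) \<in> E"
    then show thesis using is_env_not_redex[OF E] F r by simp
  next
    fix G0 G1 j v v1
    assume "(v, v1) \<in> E" "is_val v" "\<not> is_val v1"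
    then show thesis using is_envD[OF E] unfolding stuck_def by blast
  qed (rule that)
qed

lemma is_env_tclosn_stuck:
  assumes E: "is_env E" and "tclosn E k p q" "closedn 0 p" "stuck p"
  shows "stuck q"
  using assms(2-)
proof (cases rule: tclosn_stuck_cases)
  case (stuck_leaf G0 G1 j a b)
  obtain Eb s where "is_pctx Eb" "b = plug Eb (Shift s)"
    using is_env_stuck[OF E stuck_leaf(1,2)] by (elim exE conjE)
  moreover have "is_pctx G1" using cclosn_is_pctx stuck_leaf by blast
  ultimately show ?thesis using stuck_leaf(4) stuck_plug_pctx_Shift[of "ctx_comp G1 Eb" s] by simp
next
  case (val_leaf G0 G1 j a b)
  then show ?thesis using is_envD[OF E] unfolding stuck_def by blast
qed

definition reaches_like :: "trm \<Rightarrow> trm \<Rightarrow> bool" where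
  "reaches_like q x \<longleftrightarrow>
    (is_val x \<longrightarrow> (\<exists>y. reds q y \<and> is_val y)) \<and> (stuck x \<longrightarrow> (\<exists>y. reds q y \<and> stuck y))"

lemma reaches_like_reds: "reds q q' \<Longrightarrow> reaches_like q' x \<Longrightarrow> reaches_like q x"
  unfolding reaches_like_def by (meson rtranclp_trans)

locale env_bisimulation =
  fixes Es :: "rel set" and Ts :: "(rel \<times> trm \<times> trm) set"
  assumes env_bisim: "env_bisim Es Ts"
begin

lemma triple_clauses:
  "(E, t0, t1) \<in> Ts \<Longrightarrow>
       (\<forall>t0'. red t0 t0' \<longrightarrow> (\<exists>t1'. reds t1 t1' \<and> (E, t0', t1') \<in> Ts)) \<and>
       (is_val t0 \<longrightarrow> (\<exists>v1. reds t1 v1 \<and> is_val v1 \<and> insert (t0, v1) E \<in> Es)) \<and>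
       (stuck t0 \<longrightarrow> (\<exists>t1'. reds t1 t1' \<and> stuck t1' \<and> insert (t0, t1') E \<in> Es))"
  using env_bisim unfolding env_bisim_def by blast

lemma env_rel_Es_Ts: "env_rel Es Ts"
  using env_bisim unfolding env_bisim_def by simp

lemma is_env: "E \<in> Es \<Longrightarrow> is_env E"
  using env_rel_Es_Ts unfolding env_rel_def by blast

lemma triple_closed: "(E, a, b) \<in> Ts \<Longrightarrow> closedn 0 a \<and> closedn 0 b"
  using env_rel_Es_Ts unfolding env_rel_def closed_def by fast

lemma triple_red: "(E, a, b) \<in> Ts \<Longrightarrow> red a a' \<Longrightarrow> \<exists>b'. reds b b' \<and> (E, a', b') \<in> Ts"
  using triple_clauses by blast

lemma triple_irreducible:
  assumes "(E, a, b) \<in> Ts" and "irreducible a"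
  shows "\<exists>b'. reds b b' \<and> insert (a, b') E \<in> Es"
proof -
  have "is_val a \<or> stuck a" using assms unfolding stuck_def by blast
  then show ?thesis using triple_clauses[OF assms(1)] by blast
qed

lemma env_clauses:
  "E \<in> Es \<Longrightarrow>
       (\<forall>s0 s1 v0 v1. (Lam s0, Lam s1) \<in> E \<longrightarrow> is_val v0 \<longrightarrow> is_val v1 \<longrightarrow>
           rtilde E v0 v1 \<longrightarrow> (E, subst0 v0 s0, subst0 v1 s1) \<in> Ts) \<and>
       (\<forall>E0 E1 s0 s1 E0' E1'. is_pctx E0 \<longrightarrow> is_pctx E1 \<longrightarrow>
           (plug E0 (Shift s0), plug E1 (Shift s1)) \<in> E \<longrightarrow>
           is_pctx E0' \<longrightarrow> is_pctx E1' \<longrightarrow> rhat E E0' E1' \<longrightarrow>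
           (E, Reset (subst0 (cont2 E0' E0) s0), Reset (subst0 (cont2 E1' E1) s1)) \<in> Ts)"
  using env_bisim unfolding env_bisim_def by (elim conjE) (erule bspec)

lemma env_lam:
  "E \<in> Es \<Longrightarrow> (Lam s0, Lam s1) \<in> E \<Longrightarrow> is_val v0 \<Longrightarrow> is_val v1 \<Longrightarrow> rtilde E v0 v1 \<Longrightarrow>
    (E, subst0 v0 s0, subst0 v1 s1) \<in> Ts"
  using env_clauses by blast

lemma env_shift:
  "E \<in> Es \<Longrightarrow> is_pctx E0 \<Longrightarrow> is_pctx E1 \<Longrightarrow> (plug E0 (Shift s0), plug E1 (Shift s1)) \<in> E \<Longrightarrow>
    is_pctx E0' \<Longrightarrow> is_pctx E1' \<Longrightarrow> rhat E E0' E1' \<Longrightarrow>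
    (E, Reset (subst0 (cont2 E0' E0) s0), Reset (subst0 (cont2 E1' E1) s1)) \<in> Ts"
  using env_clauses by blast

lemma env_shift_contr:
  assumes E: "E \<in> Es" and Ea: "is_pctx Ea" "closedn_ctx 0 Ea" "closedn_ctx 0 E1a" "cclosn E j Ea E1a"
    and Eb: "is_pctx Eb" "(plug Eb (Shift b), c) \<in> E"
  shows "\<exists>x1'. contr (Reset (plug E1a c)) x1' \<and> (E, Reset (subst0 (cont (ctx_comp Ea Eb)) b), x1') \<in> Ts"
proof -
  obtain Ec b1 where Ec: "is_pctx Ec" "c = plug Ec (Shift b1)"
    using is_env_stuck[OF is_env[OF E] Eb(2) stuck_plug_pctx_Shift[OF Eb(1), of b]]
    by (elim exE conjE) (rule that)
  have E1a: "is_pctx E1a" using cclosn_is_pctx[OF Ea(4) Ea(1)] .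
  have "rhat E Ea E1a" using rhat_if_cclosn[OF Ea(4) is_pctx_imp_is_fctx[OF Ea(1)] Ea(2,3)] .
  moreover have "(plug Eb (Shift b), plug Ec (Shift b1)) \<in> E" using Eb(2) Ec(2) by simp
  ultimately have "(E, Reset (subst0 (cont2 Ea Eb) b), Reset (subst0 (cont2 E1a Ec) b1)) \<in> Ts"
    using env_shift[OF E Eb(1) Ec(1) _ Ea(1) E1a] by blast
  moreover have "contr (Reset (plug E1a c)) (Reset (subst0 (cont (ctx_comp E1a Ec)) b1))"
    using contr.shift[of "ctx_comp E1a Ec" b1] Ec E1a by simp
  moreover have "cont (ctx_comp Ea Eb) = cont2 Ea Eb" "cont (ctx_comp E1a Ec) = cont2 E1a Ec"
    using cont_ctx_comp is_pctx_imp_is_fctx Ea(1) E1a by simp_all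
  ultimately show ?thesis by metis
qed

lemma env_tclosn_beta:
  assumes E: "E \<in> Es" and tc: "tclosn E k (App (Lam b) v) x1" and v: "is_val v"
    and cl: "closedn 0 (App (Lam b) v)" "closedn 0 x1"
  shows "\<exists>x1'. contr x1 x1' \<and> ((\<exists>k'. tclosn E k' (subst0 v b) x1') \<or> (E, subst0 v b, x1') \<in> Ts)"
  using tc
proof (cases rule: tclosn_AppE)
  case leaf
  have "redex (App (Lam b) v)" using v by (simp add: redex_iff)
  then show ?thesis using is_env_not_redex[OF is_env[OF E], of Hole "App (Lam b) v" x1] leaf by simp
next
  case (app k1 y k2 z)
  have z: "is_val z" using is_env_tclosn_val[OF is_env[OF E] \<open>tclosn E k2 v z\<close> v] .
  from \<open>tclosn E k1 (Lam b) y\<close> show ?thesis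
  proof (cases rule: tclosn_LamE)
    case leaf
    then obtain b1 where y: "y = Lam b1"
      using is_env_tclosn_val[OF is_env[OF E] \<open>tclosn E k1 (Lam b) y\<close>] by (auto simp: is_val_iff)
    have "closedn 0 v" "closedn 0 z" using app(1) cl by simp_all
    then have "rtilde E v z"
      unfolding rtilde_def closed_def tclos_iff_tclosn using app(3) by blast
    then have "(E, subst0 v b, subst0 z b1) \<in> Ts" using env_lam[OF E _ v z] leaf y by simp
    then show ?thesis using contr.beta[OF z] app y by blast
  next
    case (lam b1)
    obtain k' where "tclosn E k' (subst0 v b) (subst0 z b1)"
      using tclosn_subst[OF \<open>tclosn E k1 b b1\<close> closed_rel_if_is_env[OF is_env[OF E]] \<open>tclosn E k2 v z\<close>]
      by blast
    then show ?thesis using contr.beta[OF z] app lam by blast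
  qed
qed

lemma env_tclosn_plug_pctx_Shift:
  assumes E: "E \<in> Es" and tc: "tclosn E k (plug E0 (Shift b)) y" and E0: "is_pctx E0"
    and cl: "closedn 0 (plug E0 (Shift b))" "closedn 0 y"
  shows "\<exists>x1'. contr (Reset y) x1' \<and> ((\<exists>k'. tclosn E k' (Reset (subst0 (cont E0) b)) x1') \<or>
    (E, Reset (subst0 (cont E0) b), x1') \<in> Ts)"
proof -
  have clE0: "closedn_ctx 0 E0" using cl E0 closedn_plug_fctx is_pctx_imp_is_fctx by blast
  have "fctx_split E k E0 (Shift b) y"
    using tclosn_plug_fctx_split tc E0 is_pctx_imp_is_fctx by blast
  then show ?thesis
    unfolding fctx_split_def
  proof (elim disjE exE conjE)
    fix Ea Eb E1a c j
    assume split: "E0 = ctx_comp Ea Eb" "(plug Eb (Shift b), c) \<in> E" "y = plug E1a c" "cclosn E j Ea E1a"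
    have "is_fctx E1a" using cclosn_is_fctx[OF split(4)] E0 split(1) is_pctx_imp_is_fctx by simp
    then have "closedn_ctx 0 E1a" using cl(2) split(3) closedn_plug_fctx by blast
    then show ?thesis
      using env_shift_contr[OF E _ _ _ split(4) _ split(2)] split clE0 E0 by auto
  next
    fix G0 G1 j w w1
    assume "(w, w1) \<in> E" "is_val w" "\<not> is_val w1"
    then show ?thesis using is_envD[OF is_env[OF E]] unfolding stuck_def by blast
  next
    fix E1 z i1 i2
    assume hole: "y = plug E1 z" "cclosn E i1 E0 E1" "tclosn E i2 (Shift b) z"
    have E1: "is_pctx E1" using cclosn_is_pctx hole E0 by blast
    have clE1: "closedn_ctx 0 E1" using cl hole E1 closedn_plug_fctx is_pctx_imp_is_fctx by auto
    from \<open>tclosn E i2 (Shift b) z\<close> show ?thesis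
    proof (cases rule: tclosn_ShiftE)
      case leaf
      then show ?thesis using env_shift_contr[OF E E0 clE0 clE1 hole(2), of Hole b z] hole by auto
    next
      case (shft b1)
      have "tclosn E i1 (cont E0) (cont E1)" using tclosn_cont hole E0 clE0 clE1 by blast
      then obtain k' where "tclosn E k' (subst0 (cont E0) b) (subst0 (cont E1) b1)"
        using tclosn_subst[OF \<open>tclosn E i2 b b1\<close> closed_rel_if_is_env[OF is_env[OF E]]] by blast
      then show ?thesis using contr.shift[OF E1] hole shft by (blast intro: tclosn.rst)
    qed
  qed
qed

lemma env_tclosn_shift:
  assumes E: "E \<in> Es" and tc: "tclosn E k (Reset (plug E0 (Shift b))) x1" and E0: "is_pctx E0"
    and cl: "closedn 0 (plug E0 (Shift b))" "closedn 0 x1"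
  shows "\<exists>x1'. contr x1 x1' \<and> ((\<exists>k'. tclosn E k' (Reset (subst0 (cont E0) b)) x1') \<or>
    (E, Reset (subst0 (cont E0) b), x1') \<in> Ts)"
  using tc
proof (cases rule: tclosn_ResetE)
  case leaf
  then show ?thesis
    using is_env_not_redex[OF is_env[OF E], of Hole "Reset (plug E0 (Shift b))" x1] E0
    by (auto simp: redex_iff)
next
  case (rst y)
  then show ?thesis using env_tclosn_plug_pctx_Shift[OF E _ E0 cl(1)] cl(2) by simp
qed

lemma env_tclosn_contr:
  assumes E: "E \<in> Es" and "tclosn E k r x1" "contr r r'" "closedn 0 r" "closedn 0 x1"
  shows "\<exists>x1'. contr x1 x1' \<and> ((\<exists>k'. tclosn E k' r' x1') \<or> (E, r', x1') \<in> Ts)"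
  using assms(3)
proof cases
  case (beta v t)
  then show ?thesis using env_tclosn_beta assms by simp
next
  case (shift E0 t)
  then show ?thesis using env_tclosn_shift assms by simp
next
  case reset
  from assms(2) reset have "tclosn E k (Reset r') x1" by simp
  then show ?thesis
  proof (cases rule: tclosn_ResetE)
    case leaf
    then show ?thesis
      using is_env_not_redex[OF is_env[OF E], of Hole "Reset r'" x1] reset by (auto simp: redex_iff)
  next
    case (rst y)
    then show ?thesis using contr.reset is_env_tclosn_val[OF is_env[OF E]] reset by blast
  qed
qed

definition upto_ctx :: "trm \<Rightarrow> trm \<Rightarrow> bool" where
  "upto_ctx p0 p1 \<longleftrightarrow> closedn 0 p0 \<and> closedn 0 p1 \<and>
    ((\<exists>E k. E \<in> Es \<and> tclosn E k p0 p1) \<or>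
     (\<exists>E F0 F1 a0 a1 j. (E, a0, a1) \<in> Ts \<and> is_fctx F0 \<and> cclosn E j F0 F1 \<and>
        p0 = plug F0 a0 \<and> p1 = plug F1 a1))"

lemma env_tclosn_step:
  assumes E: "E \<in> Es" and tc: "tclosn E k p q" and cl: "closedn 0 p" "closedn 0 q"
    and "red p p'"
  shows "\<exists>q'. red q q' \<and> upto_ctx p' q'"
proof -
  obtain F r r' where F: "is_fctx F" "contr r r'" "p = plug F r" "p' = plug F r'"
    using \<open>red p p'\<close> unfolding red_iff_contr by blast
  then obtain F1 x1 j1 j2 where F1: "q = plug F1 x1" "cclosn E j1 F F1" "tclosn E j2 r x1"
    using is_env_tclosn_plug_redex[OF is_env[OF E]] tc unfolding redex_def by blast
  have "is_fctx F1" using cclosn_is_fctx F1 F by blast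
  then have "closedn 0 r" "closedn 0 x1" using cl F F1 closedn_plug_fctx by auto
  then obtain x1' where x1': "contr x1 x1'" "(\<exists>k'. tclosn E k' r' x1') \<or> (E, r', x1') \<in> Ts"
    using env_tclosn_contr[OF E F1(3) F(2)] by blast
  have red: "red q (plug F1 x1')" using red_iff_contr \<open>is_fctx F1\<close> F1(1) x1'(1) by blast
  moreover have "closedn 0 p'" "closedn 0 (plug F1 x1')"
    using red_closedn \<open>red p p'\<close> red cl by blast+
  moreover have "(\<exists>k'. tclosn E k' p' (plug F1 x1')) \<or>
      (\<exists>E' F0 F1' a0 a1 j. (E', a0, a1) \<in> Ts \<and> is_fctx F0 \<and> cclosn E' j F0 F1' \<and>
        p' = plug F0 a0 \<and> plug F1 x1' = plug F1' a1)"
    using x1'(2)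
  proof
    assume "\<exists>k'. tclosn E k' r' x1'"
    then show ?thesis using cclosn_plug[OF F1(2)] F(4) by blast
  next
    assume "(E, r', x1') \<in> Ts"
    then show ?thesis using F1(2) F(1,4) by blast
  qed
  ultimately show ?thesis unfolding upto_ctx_def using E by blast
qed

lemma triple_irreducible_tclosn:
  assumes T: "(E, a0, a1) \<in> Ts" and F: "is_fctx F0" "cclosn E j F0 F1"
    and cl: "closedn 0 (plug F1 a1)" and "irreducible a0"
  shows "\<exists>q' E' k. reds (plug F1 a1) q' \<and> E' \<in> Es \<and> tclosn E' k (plug F0 a0) q' \<and> closedn 0 q'"
proof -
  have F1: "is_fctx F1" using cclosn_is_fctx F by blast
  obtain w where w: "reds a1 w" "insert (a0, w) E \<in> Es"
    using triple_irreducible[OF T \<open>irreducible a0\<close>] by blast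
  let ?E' = "insert (a0, w) E"
  have "closedn 0 w" using is_envD[OF is_env[OF w(2)], of a0 w] by simp
  then have "closedn 0 (plug F1 w)" using cl F1 closedn_plug_fctx by auto
  moreover have "tclosn ?E' (j + Suc 0) (plug F0 a0) (plug F1 w)"
    using cclosn_plug[OF cclosn_mono[OF F(2), of ?E'] tclosn.base[of a0 w ?E']] by auto
  moreover have "reds (plug F1 a1) (plug F1 w)" using reds_plug_fctx[OF w(1) F1] .
  ultimately show ?thesis using w(2) by blast
qed

lemma upto_ctx_cases:
  assumes "upto_ctx p q"
  obtains (env) E k where "E \<in> Es" "tclosn E k p q"
  | (triple) E F0 F1 a0 a1 j where "(E, a0, a1) \<in> Ts" "is_fctx F0" "cclosn E j F0 F1"
      "p = plug F0 a0" "q = plug F1 a1"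
  using assms unfolding upto_ctx_def by blast

lemma upto_ctx_irreducible:
  assumes "upto_ctx p q" and "irreducible p"
  shows "\<exists>q' E k. reds q q' \<and> E \<in> Es \<and> tclosn E k p q' \<and> closedn 0 q'"
  using assms(1)
proof (cases rule: upto_ctx_cases)
  case env
  then show ?thesis using assms(1) unfolding upto_ctx_def by blast
next
  case (triple E F0 F1 a0 a1 j)
  have "irreducible a0" using assms(2) triple irreducible_plug_fctx by blast
  moreover have "closedn 0 q" using assms(1) unfolding upto_ctx_def by blast
  ultimately show ?thesis using triple_irreducible_tclosn[OF triple(1-3)] triple(4,5) by simp
qed

lemma upto_ctx_step:
  assumes "upto_ctx p q" and "red p p'"
  shows "\<exists>q'. reds q q' \<and> upto_ctx p' q'"
proof -
  have cl: "closedn 0 p" "closedn 0 q" using assms(1) unfolding upto_ctx_def by auto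
  from assms(1) show ?thesis
  proof (cases rule: upto_ctx_cases)
    case env
    then show ?thesis using env_tclosn_step cl assms(2) by blast
  next
    case (triple E F0 F1 a0 a1 j)
    show ?thesis
    proof (cases "irreducible a0")
      case True
      then obtain q1 E' k' where q1: "reds q q1" "E' \<in> Es" "tclosn E' k' p q1" "closedn 0 q1"
        using triple_irreducible_tclosn[OF triple(1-3)] triple(4,5) cl by auto
      then obtain q' where "red q1 q'" "upto_ctx p' q'" using env_tclosn_step cl assms(2) by blast
      then show ?thesis using q1(1) by (meson rtranclp.rtrancl_into_rtrancl)
    next
      case False
      then obtain a0' where a0': "red a0 a0'" unfolding irreducible_def by blast
      have p': "p' = plug F0 a0'"
        using red_deterministic[OF assms(2)] red_plug_fctx[OF a0' triple(2)] triple(4) by simp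
      obtain a1' where a1': "reds a1 a1'" "(E, a0', a1') \<in> Ts" using triple_red[OF triple(1) a0'] by blast
      have F1: "is_fctx F1" using cclosn_is_fctx triple by blast
      have reds: "reds q (plug F1 a1')" using reds_plug_fctx[OF a1'(1) F1] triple(5) by simp
      have "upto_ctx p' (plug F1 a1')"
        unfolding upto_ctx_def
        using a1'(2) triple(2,3) p' red_closedn[OF assms(2) cl(1)] reds_closedn[OF reds cl(2)] by blast
      then show ?thesis using reds by blast
    qed
  qed
qed

lemma upto_ctx_reaches_like:
  assumes "reds p x" and "upto_ctx p q"
  shows "reaches_like q x"
  using assms
proof (induction arbitrary: q rule: converse_rtranclp_induct)
  case base
  have "closedn 0 x" using base unfolding upto_ctx_def by blast
  show ?case
    unfolding reaches_like_def
  proof (intro conjI impI)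
    assume "is_val x"
    then obtain q' E k where "reds q q'" "E \<in> Es" "tclosn E k x q'"
      using upto_ctx_irreducible[OF base val_irreducible[OF \<open>is_val x\<close>]] by blast
    then show "\<exists>y. reds q y \<and> is_val y" using is_env_tclosn_val is_env \<open>is_val x\<close> by blast
  next
    assume "stuck x"
    then obtain q' E k where "reds q q'" "E \<in> Es" "tclosn E k x q'"
      using upto_ctx_irreducible[OF base] unfolding stuck_def by blast
    then show "\<exists>y. reds q y \<and> stuck y"
      using is_env_tclosn_stuck is_env \<open>closedn 0 x\<close> \<open>stuck x\<close> by blast
  qed
next
  case (step p p')
  obtain q' where "reds q q'" "upto_ctx p' q'" using upto_ctx_step[OF step(4) step(1)] by blast
  then show ?case using step(3) reaches_like_reds by blast
qed

lemma upto_ctx_reaches_like_trans: "upto_ctx m q \<Longrightarrow> reaches_like m x \<Longrightarrow> reaches_like q x"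
  using upto_ctx_reaches_like unfolding reaches_like_def by blast

lemma active_reaches_like:
  assumes T: "({}, a0, a1) \<in> Ts" and act: "active {(a0, a1)} k p q" and cl: "closedn 0 q"
    and IH: "\<And>j m. j < k \<Longrightarrow> tclosn {(a0, a1)} j p m \<Longrightarrow> closedn 0 m \<Longrightarrow> reaches_like m x"
  shows "reaches_like q x"
proof -
  obtain G0 G1 j where G: "p = plug G0 a0" "q = plug G1 a1" "is_fctx G0"
    "cclosn {(a0, a1)} j G0 G1" "j < k"
    using act unfolding active_def by blast
  have G1: "is_fctx G1" using cclosn_is_fctx G by blast
  \<comment> \<open>Replace the active a1 by a0: m is related to p with fewer occurrences of the pair,
    and to q by the triple ({}, a0, a1) under the context G1.\<close>
  define m where "m = plug G1 a0"
  have "closedn 0 m" using m_def cl G(2) G1 triple_closed[OF T] closedn_plug_fctx by auto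
  moreover have "tclosn {(a0, a1)} j p m" using cclosn_plug[OF G(4) tclosn_refl] G(1) m_def by simp
  ultimately have "reaches_like m x" using IH G(5) by blast
  moreover have "upto_ctx m q"
    unfolding upto_ctx_def using \<open>closedn 0 m\<close> cl T G1 cclosn_refl[OF G1] m_def G(2) by blast
  ultimately show ?thesis using upto_ctx_reaches_like_trans by blast
qed

lemma tclosn_reaches_like:
  assumes T: "({}, a0, a1) \<in> Ts"
  shows "(red ^^ n) p x \<Longrightarrow> tclosn {(a0, a1)} k p q \<Longrightarrow> closedn 0 p \<Longrightarrow> closedn 0 q \<Longrightarrow>
    reaches_like q x"
  \<comment> \<open>Lexicographic induction on the number n of steps to x and the number k of occurrences.\<close>
proof (induction n arbitrary: p q k)
  case 0
  then have "p = x" by simp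
  from 0 show ?case
  proof (induction k arbitrary: q rule: less_induct)
    case (less k)
    have IH: "\<And>j m. j < k \<Longrightarrow> tclosn {(a0, a1)} j p m \<Longrightarrow> closedn 0 m \<Longrightarrow> reaches_like m x"
      using less by blast
    have active: "active {(a0, a1)} k p q \<Longrightarrow> reaches_like q x"
      using active_reaches_like[OF T _ less.prems(4)] IH by blast
    have "is_val q \<or> active {(a0, a1)} k p q" if "is_val x"
      using tclosn_val_or_active less.prems(2) that \<open>p = x\<close> by blast
    moreover have "stuck q \<or> active {(a0, a1)} k p q" if "stuck x"
      using tclosn_stuck_or_active less.prems(2,3) that \<open>p = x\<close> by blast
    ultimately show ?case
      using active unfolding reaches_like_def by (metis rtranclp.rtrancl_refl)
  qed
next
  case (Suc n)
  obtain p' where p': "red p p'" "(red ^^ n) p' x" using relpowp_Suc_D2[OF Suc.prems(1)] by blast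
  from Suc.prems show ?case
  proof (induction k arbitrary: q rule: less_induct)
    case (less k)
    have IH: "\<And>j m. j < k \<Longrightarrow> tclosn {(a0, a1)} j p m \<Longrightarrow> closedn 0 m \<Longrightarrow> reaches_like m x"
      using less by blast
    have "closed_rel {(a0, a1)}" using triple_closed[OF T] unfolding closed_rel_def by blast
    from tclosn_red_or_active[OF this less.prems(2-4) p'(1)] show ?case
    proof
      assume "\<exists>q' k'. red q q' \<and> tclosn {(a0, a1)} k' p' q'"
      then obtain q' k' where "red q q'" "tclosn {(a0, a1)} k' p' q'" by blast
      moreover have "closedn 0 p'" "closedn 0 q'"
        using red_closedn p'(1) \<open>red q q'\<close> less.prems(3,4) by blast+
      ultimately show ?thesis using Suc.IH[OF p'(2)] reaches_like_reds by blast
    next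
      assume "active {(a0, a1)} k p q"
      then show ?thesis using active_reaches_like[OF T _ less.prems(4)] IH by blast
    qed
  qed
qed

end

section \<open>Soundness\<close>

lemma converse_insert_pair: "(insert (a, b) R)\<inverse> = insert (b, a) (R\<inverse>)"
  by auto

lemma is_env_converse: "is_env E \<Longrightarrow> is_env (E\<inverse>)"
  unfolding is_env_def by auto

lemma rtilde_converse: "rtilde E s t \<Longrightarrow> rtilde (E\<inverse>) t s"
  unfolding rtilde_def tclos_iff_tclosn using tclosn_converse by blast

lemma rhat_converse: "rhat E F0 F1 \<Longrightarrow> rhat (E\<inverse>) F1 F0"
  by (induction rule: rhat.induct) (auto intro: rhat.intros rtilde_converse)

lemma env_bisim_converse:
  assumes bisim: "env_bisim Es Ts"
  shows "env_bisim (converse ` Es) ((\<lambda>(E, a, b). (E\<inverse>, b, a)) ` Ts)"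
    (is "env_bisim ?Es ?Ts")
proof -
  have memE: "E \<in> ?Es \<longleftrightarrow> E\<inverse> \<in> Es" for E
    using image_eqI[of E converse "E\<inverse>" Es] by auto
  have memT: "(E, a, b) \<in> ?Ts \<longleftrightarrow> (E\<inverse>, b, a) \<in> Ts" for E a b
    using image_eqI[of "(E, a, b)" "\<lambda>(E, a, b). (E\<inverse>, b, a)" "(E\<inverse>, b, a)" Ts] by auto
  have "env_rel ?Es ?Ts"
    using bisim unfolding env_bisim_def env_rel_def
    by (auto simp: memE memT dest: is_env_converse)
  moreover have "\<forall>E t0 t1. (E, t0, t1) \<in> ?Ts \<longrightarrow>
       (\<forall>t0'. red t0 t0' \<longrightarrow> (\<exists>t1'. reds t1 t1' \<and> (E, t0', t1') \<in> ?Ts)) \<and>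
       (is_val t0 \<longrightarrow> (\<exists>v1. reds t1 v1 \<and> is_val v1 \<and> insert (t0, v1) E \<in> ?Es)) \<and>
       (stuck t0 \<longrightarrow> (\<exists>t1'. reds t1 t1' \<and> stuck t1' \<and> insert (t0, t1') E \<in> ?Es)) \<and>
       (\<forall>t1'. red t1 t1' \<longrightarrow> (\<exists>t0'. reds t0 t0' \<and> (E, t0', t1') \<in> ?Ts)) \<and>
       (is_val t1 \<longrightarrow> (\<exists>v0. reds t0 v0 \<and> is_val v0 \<and> insert (v0, t1) E \<in> ?Es)) \<and>
       (stuck t1 \<longrightarrow> (\<exists>t0'. reds t0 t0' \<and> stuck t0' \<and> insert (t0', t1) E \<in> ?Es))"
    (is "\<forall>E t0 t1. _ \<longrightarrow> ?T E t0 t1")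
  proof (intro allI impI)
    fix E t0 t1
    assume "(E, t0, t1) \<in> ?Ts"
    then have "(E\<inverse>, t1, t0) \<in> Ts" using memT by blast
    with bisim have "(\<forall>t1'. red t1 t1' \<longrightarrow> (\<exists>t0'. reds t0 t0' \<and> (E\<inverse>, t1', t0') \<in> Ts)) \<and>
       (is_val t1 \<longrightarrow> (\<exists>v0. reds t0 v0 \<and> is_val v0 \<and> insert (t1, v0) (E\<inverse>) \<in> Es)) \<and>
       (stuck t1 \<longrightarrow> (\<exists>t0'. reds t0 t0' \<and> stuck t0' \<and> insert (t1, t0') (E\<inverse>) \<in> Es)) \<and>
       (\<forall>t0'. red t0 t0' \<longrightarrow> (\<exists>t1'. reds t1 t1' \<and> (E\<inverse>, t1', t0') \<in> Ts)) \<and>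
       (is_val t0 \<longrightarrow> (\<exists>v1. reds t1 v1 \<and> is_val v1 \<and> insert (v1, t0) (E\<inverse>) \<in> Es)) \<and>
       (stuck t0 \<longrightarrow> (\<exists>t1'. reds t1 t1' \<and> stuck t1' \<and> insert (t1', t0) (E\<inverse>) \<in> Es))"
      unfolding env_bisim_def by blast
    then show "?T E t0 t1" by (simp add: memE memT converse_insert_pair)
  qed
  moreover have "\<forall>E \<in> ?Es.
       (\<forall>s0 s1 v0 v1. (Lam s0, Lam s1) \<in> E \<longrightarrow> is_val v0 \<longrightarrow> is_val v1 \<longrightarrow>
           rtilde E v0 v1 \<longrightarrow> (E, subst0 v0 s0, subst0 v1 s1) \<in> ?Ts) \<and>
       (\<forall>E0 E1 s0 s1 E0' E1'. is_pctx E0 \<longrightarrow> is_pctx E1 \<longrightarrow>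
           (plug E0 (Shift s0), plug E1 (Shift s1)) \<in> E \<longrightarrow>
           is_pctx E0' \<longrightarrow> is_pctx E1' \<longrightarrow> rhat E E0' E1' \<longrightarrow>
           (E, Reset (subst0 (cont2 E0' E0) s0), Reset (subst0 (cont2 E1' E1) s1)) \<in> ?Ts)"
    (is "\<forall>E \<in> ?Es. ?L E")
  proof
    fix E
    assume "E \<in> ?Es"
    then have "E\<inverse> \<in> Es" using memE by blast
    with bisim have "(\<forall>s0 s1 v0 v1. (Lam s0, Lam s1) \<in> E\<inverse> \<longrightarrow> is_val v0 \<longrightarrow> is_val v1 \<longrightarrow>
           rtilde (E\<inverse>) v0 v1 \<longrightarrow> (E\<inverse>, subst0 v0 s0, subst0 v1 s1) \<in> Ts) \<and>
       (\<forall>E0 E1 s0 s1 E0' E1'. is_pctx E0 \<longrightarrow> is_pctx E1 \<longrightarrow>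
           (plug E0 (Shift s0), plug E1 (Shift s1)) \<in> E\<inverse> \<longrightarrow>
           is_pctx E0' \<longrightarrow> is_pctx E1' \<longrightarrow> rhat (E\<inverse>) E0' E1' \<longrightarrow>
           (E\<inverse>, Reset (subst0 (cont2 E0' E0) s0), Reset (subst0 (cont2 E1' E1) s1)) \<in> Ts)"
      unfolding env_bisim_def by (elim conjE) (erule bspec)
    then show "?L E"
      using rtilde_converse rhat_converse by (simp add: memT)
  qed
  ultimately show ?thesis unfolding env_bisim_def by (intro conjI)
qed

lemma tclosn_plug: "(a, b) \<in> Q \<Longrightarrow> \<exists>k. tclosn Q k (plug C a) (plug C b)"
  by (induction C) (auto intro: tclosn.intros tclosn_refl)

lemma (in env_bisimulation) plug_reaches_like:
  assumes "({}, t0, t1) \<in> Ts" and "closed (plug C t0)" "closed (plug C t1)" "reds (plug C t0) x"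
  shows "reaches_like (plug C t1) x"
proof -
  obtain k where k: "tclosn {(t0, t1)} k (plug C t0) (plug C t1)"
    using tclosn_plug[of t0 t1 "{(t0, t1)}" C] by blast
  obtain n where n: "(red ^^ n) (plug C t0) x" using assms(4) unfolding rtranclp_power ..
  show ?thesis using tclosn_reaches_like[OF assms(1) n k] assms(2,3) unfolding closed_def .
qed

lemma evals_val_iff: "(\<exists>v. evals t v \<and> is_val v) \<longleftrightarrow> (\<exists>v. reds t v \<and> is_val v)"
  unfolding evals_def using val_irreducible by blast

lemma evals_stuck_iff: "(\<exists>u. evals t u \<and> stuck u) \<longleftrightarrow> (\<exists>u. reds t u \<and> stuck u)"
  unfolding evals_def stuck_def by blast

lemma ctx_equiv_if_reaches_like:
  assumes "\<And>C x. closed (plug C t0) \<Longrightarrow> closed (plug C t1) \<Longrightarrow> reds (plug C t0) x \<Longrightarrow>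
      reaches_like (plug C t1) x"
    and "\<And>C x. closed (plug C t0) \<Longrightarrow> closed (plug C t1) \<Longrightarrow> reds (plug C t1) x \<Longrightarrow>
      reaches_like (plug C t0) x"
  shows "ctx_equiv t0 t1"
  unfolding ctx_equiv_def evals_val_iff evals_stuck_iff
proof (intro allI impI)
  fix C
  assume "closed (plug C t0)" "closed (plug C t1)"
  with assms show "((\<exists>v. reds (plug C t0) v \<and> is_val v) \<longleftrightarrow> (\<exists>v. reds (plug C t1) v \<and> is_val v)) \<and>
      ((\<exists>u. reds (plug C t0) u \<and> stuck u) \<longleftrightarrow> (\<exists>u. reds (plug C t1) u \<and> stuck u))"
    unfolding reaches_like_def by blast
qed

theorem corollary1:
  fixes t0 t1 :: trm
  assumes "closed t0" and "closed t1"
  assumes "approx {} t0 t1"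
  shows "ctx_equiv t0 t1"
proof -
  obtain Es Ts where bisim: "env_bisim Es Ts" and T: "({}, t0, t1) \<in> Ts"
    using assms(3) unfolding approx_def by blast
  interpret env_bisimulation Es Ts by (rule env_bisimulation.intro[OF bisim])
  interpret converse: env_bisimulation "converse ` Es" "(\<lambda>(E, a, b). (E\<inverse>, b, a)) ` Ts"
    by (rule env_bisimulation.intro[OF env_bisim_converse[OF bisim]])
  have T': "({}, t1, t0) \<in> (\<lambda>(E, a, b). (E\<inverse>, b, a)) ` Ts"
    using image_eqI[of "({}, t1, t0)" "\<lambda>(E, a, b). (E\<inverse>, b, a)" "({}, t0, t1)" Ts] T by simp
  show ?thesis
    using plug_reaches_like[OF T] converse.plug_reaches_like[OF T']
    by (intro ctx_equiv_if_reaches_like)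
qed

end
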